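(* Let $(M, d)$ be a complete pointed metric space. Then the set $\check{M} := \{\check{x} : x \in M\}$ is a closed subset of the dual Banach space $(M^e)^*$, where $\check{x}(f)=f(x)$ for $f\in M^e$.
   Context: A pointed metric space is a metric space with a distinguished point $0$. $M^e$ denotes the normed space $E_c(M,\mathbb{R})$ of all continuous functions $f:M\to\mathbb{R}$ for which there is $k>0$ with $|f(x)|\le k\,d(x,0)$ for all $x\in M$, with norm $\|f\|_e=\sup_{x\in M,x\ne0}|f(x)|/d(x,0)$; $(M^e)^*$ is its dual with the operator norm. *)

theory Defs
  imports "HOL-Analysis.Analysis"
begin

definition Me :: "'a::metric_space \<Rightarrow> ('a \<Rightarrow> real) set" where
  "Me z = {f. continuous_on UNIV f \<and> (\<exists>k>0. \<forall>x. \<bar>f x\<bar> \<le> k * dist x z)}"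

definition norm_e :: "'a::metric_space \<Rightarrow> ('a \<Rightarrow> real) \<Rightarrow> real" where
  "norm_e z f = (SUP x\<in>{x. x \<noteq> z}. \<bar>f x\<bar> / dist x z)"

text \<open>Elements of the dual (M^e)^*: bounded linear functionals on M^e
  (represented as functions on all real-valued maps; only values on Me matter).\<close>
definition in_dual :: "'a::metric_space \<Rightarrow> (('a \<Rightarrow> real) \<Rightarrow> real) \<Rightarrow> bool" where
  "in_dual z \<phi> \<longleftrightarrow>
     (\<forall>f\<in>Me z. \<forall>g\<in>Me z. \<forall>a b::real. \<phi> (\<lambda>x. a * f x + b * g x) = a * \<phi> f + b * \<phi> g) \<and>
     (\<exists>C. \<forall>f\<in>Me z. \<bar>\<phi> f\<bar> \<le> C * norm_e z f)"

definition dual_norm :: "'a::metric_space \<Rightarrow> (('a \<Rightarrow> real) \<Rightarrow> real) \<Rightarrow> real" where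
  "dual_norm z \<phi> = (SUP f\<in>{f\<in>Me z. norm_e z f \<le> 1}. \<bar>\<phi> f\<bar>)"

definition evalf :: "'a \<Rightarrow> ('a \<Rightarrow> real) \<Rightarrow> real" where
  "evalf x = (\<lambda>f. f x)"

end

theory Submission
  imports Defs
begin

text \<open>Let \<open>\<phi>\<close> be a limit of evaluation functionals \<open>x\<^sub>n\<^sup>\<vee>\<close>. Testing against the
  1-Lipschitz functions \<open>t \<mapsto> d(t,y) - d(0,y)\<close> of \<open>M\<^sup>e\<close>-norm at most 1 shows
  \<open>d(x,y) \<le> \<parallel>\<phi> - x\<^sup>\<vee>\<parallel> + \<parallel>\<phi> - y\<^sup>\<vee>\<parallel>\<close>, so \<open>(x\<^sub>n)\<close> is Cauchy and converges to some \<open>x\<close> by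
  completeness. Every \<open>f \<in> M\<^sup>e\<close> is continuous, hence \<open>\<phi> f = lim f(x\<^sub>n) = f(x)\<close>.\<close>

lemma evalf_apply [simp]: "evalf x f = f x"
  by (simp add: evalf_def)

lemma Me_zero: "f \<in> Me z \<Longrightarrow> f z = 0"
proof -
  assume "f \<in> Me z"
  then obtain k where "\<bar>f z\<bar> \<le> k * dist z z" unfolding Me_def by blast
  then show "f z = 0" by simp
qed

lemma Me_continuous: "f \<in> Me z \<Longrightarrow> continuous_on UNIV f"
  by (simp add: Me_def)

lemma Me_bdd_above: "f \<in> Me z \<Longrightarrow> bdd_above ((\<lambda>x. \<bar>f x\<bar> / dist x z) ` {x. x \<noteq> z})"
proof -
  assume "f \<in> Me z"
  then obtain k where "\<forall>x. \<bar>f x\<bar> \<le> k * dist x z" unfolding Me_def by auto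
  then have "\<bar>f x\<bar> / dist x z \<le> k" if "x \<noteq> z" for x
    using that by (simp add: divide_le_eq)
  then show ?thesis by (auto intro!: bdd_aboveI2)
qed

lemma Me_le_norm_e: assumes "f \<in> Me z" shows "\<bar>f x\<bar> \<le> norm_e z f * dist x z"
proof (cases "x = z")
  case True
  then show ?thesis using Me_zero[OF assms] by simp
next
  case False
  then have "\<bar>f x\<bar> / dist x z \<le> norm_e z f"
    unfolding norm_e_def by (intro cSUP_upper Me_bdd_above assms) auto
  then show ?thesis using False by (simp add: divide_le_eq)
qed

text \<open>The hypothesis \<open>w \<noteq> z\<close> excludes the one-point space, where \<open>norm_e\<close> is a supremum
  over the empty set and hence unspecified.\<close>

lemma norm_e_nonneg: assumes "f \<in> Me z" "w \<noteq> z" shows "0 \<le> norm_e z f"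
proof -
  have "\<bar>f w\<bar> / dist w z \<le> norm_e z f"
    unfolding norm_e_def using assms by (intro cSUP_upper Me_bdd_above) auto
  then show ?thesis by (smt (verit) divide_nonneg_nonneg zero_le_dist)
qed

lemma norm_e_le:
  assumes "w \<noteq> z" "\<And>x. \<bar>f x\<bar> \<le> B * dist x z"
  shows "norm_e z f \<le> B"
  unfolding norm_e_def using assms by (intro cSUP_least) (auto simp: divide_le_eq)

lemma Me_scale: assumes "f \<in> Me z" shows "(\<lambda>x. c * f x) \<in> Me z"
proof -
  obtain k where k: "k > 0" "\<forall>x. \<bar>f x\<bar> \<le> k * dist x z" using assms unfolding Me_def by auto
  have "\<bar>c * f x\<bar> \<le> ((\<bar>c\<bar> + 1) * k) * dist x z" for x
  proof -
    have "\<bar>c * f x\<bar> \<le> (\<bar>c\<bar> + 1) * \<bar>f x\<bar>" by (simp add: abs_mult mult_right_mono)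
    also have "\<dots> \<le> (\<bar>c\<bar> + 1) * (k * dist x z)" using k by (intro mult_left_mono) auto
    finally show ?thesis by (simp add: mult.assoc)
  qed
  moreover have "continuous_on UNIV (\<lambda>x. c * f x)"
    using Me_continuous[OF assms] by (intro continuous_intros)
  ultimately show ?thesis unfolding Me_def using k by (auto intro!: exI[of _ "(\<bar>c\<bar> + 1) * k"])
qed

lemma in_dual_scale: assumes "in_dual z \<psi>" "f \<in> Me z" shows "\<psi> (\<lambda>x. c * f x) = c * \<psi> f"
proof -
  have "\<psi> (\<lambda>x. c * f x + 0 * f x) = c * \<psi> f + 0 * \<psi> f"
    using assms unfolding in_dual_def by blast
  then show ?thesis by simp
qed

lemma in_dual_vanishing: "in_dual z \<psi> \<Longrightarrow> f \<in> Me z \<Longrightarrow> \<forall>x. f x = 0 \<Longrightarrow> \<psi> f = 0"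
proof -
  assume "in_dual z \<psi>" "f \<in> Me z" "\<forall>x. f x = 0"
  moreover from this(3) have "f = (\<lambda>x. 0 * f x)" by auto
  ultimately show "\<psi> f = 0" by (metis in_dual_scale mult_zero_left)
qed

lemma in_dual_diff_evalf: "in_dual z \<phi> \<Longrightarrow> in_dual z (\<lambda>f. \<phi> f - evalf x f)"
proof -
  assume \<phi>: "in_dual z \<phi>"
  then obtain C where C: "\<forall>f\<in>Me z. \<bar>\<phi> f\<bar> \<le> C * norm_e z f" unfolding in_dual_def by auto
  have "\<bar>\<phi> f - f x\<bar> \<le> (C + dist x z) * norm_e z f" if "f \<in> Me z" for f
  proof -
    have "\<bar>\<phi> f - f x\<bar> \<le> \<bar>\<phi> f\<bar> + \<bar>f x\<bar>" by linarith
    also have "\<dots> \<le> C * norm_e z f + norm_e z f * dist x z"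
      using C Me_le_norm_e[OF that, of x] that by (intro add_mono) auto
    finally show ?thesis by (simp add: algebra_simps)
  qed
  moreover have "\<forall>f\<in>Me z. \<forall>g\<in>Me z. \<forall>a b. \<phi> (\<lambda>x. a * f x + b * g x) - (a * f x + b * g x)
      = a * (\<phi> f - f x) + b * (\<phi> g - g x)"
    using \<phi> unfolding in_dual_def by (simp add: algebra_simps)
  ultimately show ?thesis unfolding in_dual_def evalf_apply by blast
qed

lemma in_dual_le_dual_norm_unit:
  assumes "in_dual z \<psi>" "w \<noteq> z" "f \<in> Me z" "norm_e z f \<le> 1"
  shows "\<bar>\<psi> f\<bar> \<le> dual_norm z \<psi>"
proof -
  obtain C where C: "\<forall>f\<in>Me z. \<bar>\<psi> f\<bar> \<le> C * norm_e z f" using assms(1) unfolding in_dual_def by auto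
  have "\<bar>\<psi> g\<bar> \<le> \<bar>C\<bar>" if "g \<in> Me z" "norm_e z g \<le> 1" for g
  proof -
    have "0 \<le> norm_e z g" using norm_e_nonneg[OF that(1) assms(2)] .
    then have "C * norm_e z g \<le> \<bar>C\<bar>"
      using that(2) by (smt (verit) abs_ge_self abs_ge_zero mult_left_le mult_right_mono)
    then show ?thesis using C that(1) by fastforce
  qed
  then have "bdd_above ((\<lambda>g. \<bar>\<psi> g\<bar>) ` {g\<in>Me z. norm_e z g \<le> 1})"
    by (auto intro!: bdd_aboveI2)
  then show ?thesis unfolding dual_norm_def using assms by (intro cSUP_upper) auto
qed

lemma in_dual_le_dual_norm:
  assumes "in_dual z \<psi>" "w \<noteq> z" "f \<in> Me z"
  shows "\<bar>\<psi> f\<bar> \<le> dual_norm z \<psi> * norm_e z f"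
proof (cases "norm_e z f = 0")
  case True
  then have "\<forall>x. f x = 0" using Me_le_norm_e[OF assms(3)] by (metis abs_le_zero_iff mult_zero_left)
  then show ?thesis using in_dual_vanishing[OF assms(1,3)] True by simp
next
  case False
  define c where "c = 1 / norm_e z f"
  have n: "0 < norm_e z f" using False norm_e_nonneg[OF assms(3,2)] by simp
  have "norm_e z (\<lambda>x. c * f x) \<le> 1"
  proof (rule norm_e_le[OF assms(2)])
    fix x
    show "\<bar>c * f x\<bar> \<le> 1 * dist x z"
      using Me_le_norm_e[OF assms(3), of x] n by (simp add: c_def pos_divide_le_eq mult.commute)
  qed
  then have "\<bar>\<psi> (\<lambda>x. c * f x)\<bar> \<le> dual_norm z \<psi>"
    using in_dual_le_dual_norm_unit assms Me_scale by blast
  moreover have "\<psi> (\<lambda>x. c * f x) = c * \<psi> f" by (rule in_dual_scale[OF assms(1,3)])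
  then have "\<bar>\<psi> (\<lambda>x. c * f x)\<bar> = \<bar>\<psi> f\<bar> / norm_e z f" using n by (simp add: c_def abs_mult)
  ultimately show ?thesis using n by (simp add: pos_divide_le_eq)
qed

lemma dist_diff_in_Me: "(\<lambda>t. dist t y - dist z y) \<in> Me z"
proof -
  have "\<bar>dist t y - dist z y\<bar> \<le> 1 * dist t z" for t
    by (smt (verit) dist_commute dist_triangle)
  moreover have "continuous_on UNIV (\<lambda>t. dist t y - dist z y)"
    by (intro continuous_on_diff continuous_on_dist continuous_on_id continuous_on_const)
  ultimately show ?thesis unfolding Me_def by (auto intro!: exI[of _ 1])
qed

lemma norm_e_dist_diff_le: assumes "w \<noteq> z" shows "norm_e z (\<lambda>t. dist t y - dist z y) \<le> 1"
  by (rule norm_e_le[OF assms]) (smt (verit) dist_commute dist_triangle)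

lemma dual_norm_nonneg: assumes "in_dual z \<psi>" "w \<noteq> z" shows "0 \<le> dual_norm z \<psi>"
  using in_dual_le_dual_norm_unit[OF assms dist_diff_in_Me norm_e_dist_diff_le[OF assms(2)]]
  by (meson abs_ge_zero order_trans)

text \<open>The test function \<open>t \<mapsto> d(t,y) - d(z,y)\<close> takes the values \<open>d(x,y) - d(z,y)\<close> at \<open>x\<close>
  and \<open>-d(z,y)\<close> at \<open>y\<close>.\<close>

lemma dist_le_dual_norm_diff_evalf:
  assumes "in_dual z \<phi>" "w \<noteq> z"
  shows "dist x y \<le> dual_norm z (\<lambda>f. \<phi> f - evalf x f) + dual_norm z (\<lambda>f. \<phi> f - evalf y f)"
proof -
  let ?g = "\<lambda>t. dist t y - dist z y"
  have "\<bar>\<phi> ?g - ?g v\<bar> \<le> dual_norm z (\<lambda>f. \<phi> f - evalf v f)" for v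
    using in_dual_le_dual_norm_unit[OF in_dual_diff_evalf[OF assms(1)] assms(2)
        dist_diff_in_Me norm_e_dist_diff_le[OF assms(2)]] by simp
  from this[of x] this[of y] show ?thesis by (simp add: abs_le_iff)
qed

lemma Cauchy_if_dual_norm_diff_evalf_tendsto_0:
  assumes "in_dual z \<phi>" "w \<noteq> z"
    and lim: "(\<lambda>n. dual_norm z (\<lambda>f. \<phi> f - evalf (xs n) f)) \<longlonglongrightarrow> 0"
  shows "Cauchy xs"
proof (rule metric_CauchyI)
  fix e :: real
  assume "e > 0"
  then have "\<forall>\<^sub>F n in sequentially. dual_norm z (\<lambda>f. \<phi> f - evalf (xs n) f) < e / 2"
    using lim by (auto dest!: order_tendstoD(2)[where a = "e / 2"])
  then obtain N where N: "\<And>n. n \<ge> N \<Longrightarrow> dual_norm z (\<lambda>f. \<phi> f - evalf (xs n) f) < e / 2"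
    unfolding eventually_sequentially by blast
  have "dist (xs m) (xs n) < e" if "m \<ge> N" "n \<ge> N" for m n
    using dist_le_dual_norm_diff_evalf[OF assms(1,2), of "xs m" "xs n"] N[OF that(1)] N[OF that(2)]
    by linarith
  then show "\<exists>M. \<forall>m\<ge>M. \<forall>n\<ge>M. dist (xs m) (xs n) < e" by blast
qed

lemma eq_evalf_if_dual_norm_diff_evalf_tendsto_0:
  assumes "in_dual z \<phi>" "w \<noteq> z" "f \<in> Me z"
    and lim: "(\<lambda>n. dual_norm z (\<lambda>f. \<phi> f - evalf (xs n) f)) \<longlonglongrightarrow> 0"
    and conv: "xs \<longlonglongrightarrow> x"
  shows "\<phi> f = evalf x f"
proof -
  have bound: "\<bar>\<phi> f - f (xs n)\<bar> \<le> dual_norm z (\<lambda>f. \<phi> f - evalf (xs n) f) * norm_e z f" for n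
    using in_dual_le_dual_norm[OF in_dual_diff_evalf[OF assms(1)] assms(2,3)] by simp
  have "(\<lambda>n. \<phi> f - f (xs n)) \<longlonglongrightarrow> 0"
    by (rule Lim_null_comparison[OF always_eventually tendsto_mult_left_zero[OF lim, where c = "norm_e z f"]])
      (use bound in simp)
  moreover have "(\<lambda>n. f (xs n)) \<longlonglongrightarrow> f x"
    using continuous_on_tendsto_compose[OF Me_continuous[OF assms(3)] conv] by simp
  then have "(\<lambda>n. \<phi> f - f (xs n)) \<longlonglongrightarrow> \<phi> f - f x" by (intro tendsto_diff tendsto_const)
  ultimately have "0 = \<phi> f - f x" by (rule LIMSEQ_unique)
  then show ?thesis by simp
qed

theorem mainTheorem12:
  fixes z :: "'a::complete_space"
  assumes "in_dual z \<phi>"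
    and "\<forall>e>0. \<exists>x. dual_norm z (\<lambda>f. \<phi> f - evalf x f) < e"
  shows "\<exists>x. \<forall>f\<in>Me z. \<phi> f = evalf x f"
proof (cases "\<exists>w. w \<noteq> z")
  case False
  then have "\<forall>x. f x = 0" if "f \<in> Me z" for f
    using Me_zero[OF that] by metis
  then show ?thesis using in_dual_vanishing[OF assms(1)] by auto
next
  case True
  then obtain w where w: "w \<noteq> z" by blast
  from assms(2) have "\<forall>n. \<exists>x. dual_norm z (\<lambda>f. \<phi> f - evalf x f) < inverse (real (Suc n))"
    by simp
  then obtain xs
    where xs: "\<And>n. dual_norm z (\<lambda>f. \<phi> f - evalf (xs n) f) < inverse (real (Suc n))"
    by metis
  have lim: "(\<lambda>n. dual_norm z (\<lambda>f. \<phi> f - evalf (xs n) f)) \<longlonglongrightarrow> 0"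
  proof (rule tendsto_sandwich[OF _ _ tendsto_const LIMSEQ_inverse_real_of_nat])
    show "\<forall>\<^sub>F n in sequentially. 0 \<le> dual_norm z (\<lambda>f. \<phi> f - evalf (xs n) f)"
      using dual_norm_nonneg[OF in_dual_diff_evalf[OF assms(1)] w] by simp
    show "\<forall>\<^sub>F n in sequentially. dual_norm z (\<lambda>f. \<phi> f - evalf (xs n) f) \<le> inverse (real (Suc n))"
      using xs by (simp add: less_imp_le)
  qed
  have "Cauchy xs" using Cauchy_if_dual_norm_diff_evalf_tendsto_0[OF assms(1) w lim] .
  then obtain x where "xs \<longlonglongrightarrow> x" using Cauchy_convergent_iff convergent_def by blast
  then show ?thesis using eq_evalf_if_dual_norm_diff_evalf_tendsto_0[OF assms(1) w _ lim] by blast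
qed

end
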